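(* Let $R$ be a noetherian integral domain, $n\ge1$, $R[n]=R[t]/(t^n)$, and $M$ an $R[n]$-module of finite type. Let $M^\vee=\mathrm{Hom}_{R[n]}(M,R[n])$ and let $t_M:M\to M^{\vee\vee}$ be the canonical morphism, $t_M(m)(\phi)=\phi(m)$. Then $\mathrm{coker}(t_M)$ is a torsion module.
   Context: An element $u=\sum_{i=0}^{n-1}u_it^i\in R[n]$ ($u_i\in R$) is a non-zero-divisor iff $u_0\ne0$; let $S_n$ be the set of non-zero-divisors. For an $R[n]$-module $N$, the torsion submodule $T(N)$ is the set of $m\in N$ such that $\alpha m=0$ for some $\alpha\in S_n$; $N$ is a torsion module if $N=T(N)$. *)

theory Defs
  imports "HOL-Algebra.Module" "HOL-Computational_Algebra.Polynomial"
begin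

definition is_ideal :: "'a::comm_ring_1 set \<Rightarrow> bool" where
  "is_ideal I \<longleftrightarrow> 0 \<in> I \<and> (\<forall>x\<in>I. \<forall>y\<in>I. x + y \<in> I) \<and> (\<forall>r. \<forall>x\<in>I. r * x \<in> I)"

definition noetherian_type :: "'a::comm_ring_1 itself \<Rightarrow> bool" where
  "noetherian_type _ \<longleftrightarrow> (\<forall>I::'a set. is_ideal I \<longrightarrow>
      (\<exists>A. finite A \<and> A \<subseteq> I \<and> I = {\<Sum>a\<in>A. r a * a | r. True}))"

text \<open>Truncation modulo t^n, and the ring R[n] = R[t]/(t^n), elements represented
  by polynomials of degree < n.\<close>
definition trunc_poly :: "nat \<Rightarrow> 'a::comm_ring_1 poly \<Rightarrow> 'a poly" where
  "trunc_poly n p = (\<Sum>i<n. monom (coeff p i) i)"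

definition Rn :: "nat \<Rightarrow> 'a::comm_ring_1 poly ring" where
  "Rn n = \<lparr> carrier = {p. degree p < n}, monoid.mult = (\<lambda>p q. trunc_poly n (p * q)),
            one = 1, zero = 0, add = (+) \<rparr>"

definition nzd :: "nat \<Rightarrow> 'a::comm_ring_1 poly set" where
  "nzd n = {u \<in> carrier (Rn n). \<forall>v\<in>carrier (Rn n). u \<otimes>\<^bsub>Rn n\<^esub> v = \<zero>\<^bsub>Rn n\<^esub> \<longrightarrow> v = \<zero>\<^bsub>Rn n\<^esub>}"

definition fin_gen_module :: "('a, 'b) ring_scheme \<Rightarrow> ('a, 'm) module \<Rightarrow> bool" where
  "fin_gen_module R M \<longleftrightarrow> (\<exists>A. finite A \<and> A \<subseteq> carrier M \<and>
     (\<forall>x\<in>carrier M. \<exists>c\<in>A \<rightarrow> carrier R. x = finsum M (\<lambda>a. c a \<odot>\<^bsub>M\<^esub> a) A))"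

definition lin_to_ring :: "('a, 'b) ring_scheme \<Rightarrow> 'd set \<Rightarrow> ('d \<Rightarrow> 'd \<Rightarrow> 'd)
     \<Rightarrow> ('a \<Rightarrow> 'd \<Rightarrow> 'd) \<Rightarrow> ('d \<Rightarrow> 'a) \<Rightarrow> bool" where
  "lin_to_ring R D addD smulD f \<longleftrightarrow> f \<in> D \<rightarrow> carrier R \<and>
     (\<forall>x\<in>D. \<forall>y\<in>D. f (addD x y) = f x \<oplus>\<^bsub>R\<^esub> f y) \<and>
     (\<forall>a\<in>carrier R. \<forall>x\<in>D. f (smulD a x) = a \<otimes>\<^bsub>R\<^esub> f x)"

definition dual :: "('a, 'b) ring_scheme \<Rightarrow> ('a, 'm) module \<Rightarrow> ('m \<Rightarrow> 'a) set" where
  "dual R M = {\<phi> \<in> extensional (carrier M).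
      lin_to_ring R (carrier M) (\<lambda>x y. x \<oplus>\<^bsub>M\<^esub> y) (\<lambda>a x. a \<odot>\<^bsub>M\<^esub> x) \<phi>}"

definition dual_add :: "('a, 'b) ring_scheme \<Rightarrow> ('a, 'm) module \<Rightarrow> ('m \<Rightarrow> 'a) \<Rightarrow> ('m \<Rightarrow> 'a) \<Rightarrow> ('m \<Rightarrow> 'a)" where
  "dual_add R M \<phi> \<chi> = (\<lambda>m\<in>carrier M. \<phi> m \<oplus>\<^bsub>R\<^esub> \<chi> m)"

definition dual_smult :: "('a, 'b) ring_scheme \<Rightarrow> ('a, 'm) module \<Rightarrow> 'a \<Rightarrow> ('m \<Rightarrow> 'a) \<Rightarrow> ('m \<Rightarrow> 'a)" where
  "dual_smult R M a \<phi> = (\<lambda>m\<in>carrier M. a \<otimes>\<^bsub>R\<^esub> \<phi> m)"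

definition ddual :: "('a, 'b) ring_scheme \<Rightarrow> ('a, 'm) module \<Rightarrow> (('m \<Rightarrow> 'a) \<Rightarrow> 'a) set" where
  "ddual R M = {\<psi> \<in> extensional (dual R M).
      lin_to_ring R (dual R M) (dual_add R M) (dual_smult R M) \<psi>}"

definition ddual_smult :: "('a, 'b) ring_scheme \<Rightarrow> ('a, 'm) module \<Rightarrow> 'a \<Rightarrow> (('m \<Rightarrow> 'a) \<Rightarrow> 'a) \<Rightarrow> (('m \<Rightarrow> 'a) \<Rightarrow> 'a)" where
  "ddual_smult R M a \<psi> = (\<lambda>\<phi>\<in>dual R M. a \<otimes>\<^bsub>R\<^esub> \<psi> \<phi>)"

definition can_map :: "('a, 'b) ring_scheme \<Rightarrow> ('a, 'm) module \<Rightarrow> 'm \<Rightarrow> (('m \<Rightarrow> 'a) \<Rightarrow> 'a)" where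
  "can_map R M m = (\<lambda>\<phi>\<in>dual R M. \<phi> m)"

end

theory Submission
  imports Defs
begin

(* Write A = R[n] and S for its non-zero-divisors, the elements with nonzero constant term.
   A homomorphism \<theta> from an ideal I of A to A becomes multiplication by some b in A after
   multiplying by some c in S: if j is the least t-adic valuation occurring in I and
   v0 = t^j u in I realises it, then u lies in S, \<theta>(v0) = t^j b because t^(n-j) kills v0, and
   u \<theta>(x) = b x for all x in I.  By induction on k the same holds for homomorphisms from
   submodules of A^k to A: once the first k coordinates are taken care of, what remains factors
   through the last coordinate, whose image is an ideal.  Evaluation at generators h_1..h_k
   embeds the dual of M into A^k, so every \<psi> in the double dual satisfies
   c \<psi>(\<phi>) = \<Sum> a_i \<phi>(h_i) = \<phi>(\<Sum> a_i h_i) for some c in S. *)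

section \<open>Linear maps to the base ring\<close>

definition lin_closed :: "('a, 'b) ring_scheme \<Rightarrow> 'd set \<Rightarrow> ('d \<Rightarrow> 'd \<Rightarrow> 'd)
     \<Rightarrow> ('a \<Rightarrow> 'd \<Rightarrow> 'd) \<Rightarrow> bool" where
  "lin_closed R D addD smulD \<longleftrightarrow>
     (\<forall>x\<in>D. \<forall>y\<in>D. addD x y \<in> D) \<and> (\<forall>a\<in>carrier R. \<forall>x\<in>D. smulD a x \<in> D)"

definition ideal_homs_fractional :: "('a, 'b) ring_scheme \<Rightarrow> 'a set \<Rightarrow> bool" where
  "ideal_homs_fractional R S \<longleftrightarrow> (\<forall>I \<theta>. I \<subseteq> carrier R \<longrightarrow>
     lin_closed R I (\<lambda>x y. x \<oplus>\<^bsub>R\<^esub> y) (\<lambda>a x. a \<otimes>\<^bsub>R\<^esub> x) \<longrightarrow>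
     lin_to_ring R I (\<lambda>x y. x \<oplus>\<^bsub>R\<^esub> y) (\<lambda>a x. a \<otimes>\<^bsub>R\<^esub> x) \<theta> \<longrightarrow>
     (\<exists>c\<in>S. \<exists>b\<in>carrier R. \<forall>x\<in>I. c \<otimes>\<^bsub>R\<^esub> \<theta> x = b \<otimes>\<^bsub>R\<^esub> x))"

lemma ideal_homs_fractionalD:
  assumes "ideal_homs_fractional R S" and "I \<subseteq> carrier R"
    and "lin_closed R I (\<lambda>x y. x \<oplus>\<^bsub>R\<^esub> y) (\<lambda>a x. a \<otimes>\<^bsub>R\<^esub> x)"
    and "lin_to_ring R I (\<lambda>x y. x \<oplus>\<^bsub>R\<^esub> y) (\<lambda>a x. a \<otimes>\<^bsub>R\<^esub> x) \<theta>"
  shows "\<exists>c\<in>S. \<exists>b\<in>carrier R. \<forall>x\<in>I. c \<otimes>\<^bsub>R\<^esub> \<theta> x = b \<otimes>\<^bsub>R\<^esub> x"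
  using assms unfolding ideal_homs_fractional_def by blast

lemma lin_closed_image:
  assumes "lin_closed R D addD smulD"
    and "\<forall>x\<in>D. \<forall>y\<in>D. f (addD x y) = addV (f x) (f y)"
    and "\<forall>a\<in>carrier R. \<forall>x\<in>D. f (smulD a x) = smulV a (f x)"
  shows "lin_closed R (f ` D) addV smulV"
  using assms unfolding lin_closed_def by (smt (verit) image_iff)

lemma lin_to_ring_inv_into:
  assumes "inj_on f D" and closed: "lin_closed R D addD smulD"
    and f_add: "\<forall>x\<in>D. \<forall>y\<in>D. f (addD x y) = addV (f x) (f y)"
    and f_smul: "\<forall>a\<in>carrier R. \<forall>x\<in>D. f (smulD a x) = smulV a (f x)"
    and "lin_to_ring R D addD smulD \<psi>"
  shows "lin_to_ring R (f ` D) addV smulV (\<psi> \<circ> inv_into D f)"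
proof -
  have "inv_into D f (addV (f x) (f y)) = addD x y" if "x \<in> D" "y \<in> D" for x y
    using that f_add closed \<open>inj_on f D\<close> by (metis inv_into_f_f lin_closed_def)
  moreover have "inv_into D f (smulV a (f x)) = smulD a x" if "a \<in> carrier R" "x \<in> D" for a x
    using that f_smul closed \<open>inj_on f D\<close> by (metis inv_into_f_f lin_closed_def)
  ultimately show ?thesis
    using assms by (auto simp: lin_to_ring_def inv_into_f_f)
qed

context cring
begin

lemma lin_to_ring_cmult:
  assumes "c \<in> carrier R" and "lin_to_ring R D addD smulD f"
  shows "lin_to_ring R D addD smulD (\<lambda>x. c \<otimes> f x)"
  using assms by (auto simp: lin_to_ring_def Pi_iff r_distr m_lcomm)

lemma lin_to_ring_diff:
  assumes "lin_to_ring R D addD smulD f" and "lin_to_ring R D addD smulD g"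
  shows "lin_to_ring R D addD smulD (\<lambda>x. f x \<ominus> g x)"
proof -
  have "f x \<oplus> f y \<ominus> (g x \<oplus> g y) = (f x \<ominus> g x) \<oplus> (f y \<ominus> g y)"
    if "f x \<in> carrier R" "f y \<in> carrier R" "g x \<in> carrier R" "g y \<in> carrier R" for x y
    using that by algebra
  moreover have "a \<otimes> f x \<ominus> a \<otimes> g x = a \<otimes> (f x \<ominus> g x)"
    if "a \<in> carrier R" "f x \<in> carrier R" "g x \<in> carrier R" for a x
    using that by algebra
  ultimately show ?thesis
    using assms by (auto simp: lin_to_ring_def Pi_def)
qed

end

section \<open>Linear maps on submodules of R^k\<close>

definition vecs :: "('a, 'b) ring_scheme \<Rightarrow> nat \<Rightarrow> (nat \<Rightarrow> 'a) set" where
  "vecs R k = {v. (\<forall>i. v i \<in> carrier R) \<and> (\<forall>i\<ge>k. v i = \<zero>\<^bsub>R\<^esub>)}"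

abbreviation vec_add :: "('a, 'b) ring_scheme \<Rightarrow> (nat \<Rightarrow> 'a) \<Rightarrow> (nat \<Rightarrow> 'a) \<Rightarrow> nat \<Rightarrow> 'a" where
  "vec_add R v w \<equiv> \<lambda>i. v i \<oplus>\<^bsub>R\<^esub> w i"

abbreviation vec_smult :: "('a, 'b) ring_scheme \<Rightarrow> 'a \<Rightarrow> (nat \<Rightarrow> 'a) \<Rightarrow> nat \<Rightarrow> 'a" where
  "vec_smult R a v \<equiv> \<lambda>i. a \<otimes>\<^bsub>R\<^esub> v i"

context cring
begin

lemma lin_to_ring_dot:
  assumes "\<forall>i. a i \<in> carrier R" and "V \<subseteq> vecs R k"
  shows "lin_to_ring R V (vec_add R) (vec_smult R) (\<lambda>v. \<Oplus>i\<in>{..<m}. a i \<otimes> v i)"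
proof -
  have carr: "v i \<in> carrier R" if "v \<in> V" for v i
    using that assms(2) by (auto simp: vecs_def)
  have "(\<Oplus>i\<in>{..<m}. a i \<otimes> (v i \<oplus> w i)) = (\<Oplus>i\<in>{..<m}. a i \<otimes> v i) \<oplus> (\<Oplus>i\<in>{..<m}. a i \<otimes> w i)"
    if "v \<in> V" "w \<in> V" for v w
    using that assms(1) carr by (simp add: r_distr finsum_addf)
  moreover have "(\<Oplus>i\<in>{..<m}. a i \<otimes> (r \<otimes> v i)) = r \<otimes> (\<Oplus>i\<in>{..<m}. a i \<otimes> v i)"
    if "v \<in> V" "r \<in> carrier R" for v r
    using that assms(1) carr by (simp add: m_lcomm finsum_rdistr)
  ultimately show ?thesis
    using assms(1) carr by (auto simp: lin_to_ring_def)
qed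

lemma lin_to_ring_coord_cong:
  assumes V: "V \<subseteq> vecs R k" "lin_closed R V (vec_add R) (vec_smult R)"
    and \<chi>: "lin_to_ring R V (vec_add R) (vec_smult R) \<chi>"
    and vanish: "\<And>v. v \<in> V \<Longrightarrow> v j = \<zero> \<Longrightarrow> \<chi> v = \<zero>"
    and vw: "v \<in> V" "w \<in> V" "v j = w j"
  shows "\<chi> v = \<chi> w"
proof -
  define z where "z = vec_add R v (vec_smult R (\<ominus> \<one>) w)"
  have w': "vec_smult R (\<ominus> \<one>) w \<in> V" and z: "z \<in> V"
    using V(2) vw by (auto simp: lin_closed_def z_def)
  have carr: "\<chi> v \<in> carrier R" "\<chi> w \<in> carrier R"
    using \<chi> vw by (auto simp: lin_to_ring_def)
  have "\<chi> v \<oplus> \<ominus> \<one> \<otimes> \<chi> w = \<chi> z"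
    using \<chi> vw w' by (simp add: lin_to_ring_def z_def)
  also have "\<dots> = \<zero>"
    using vw V(1) by (intro vanish z) (auto simp: z_def vecs_def l_minus r_neg)
  finally have "\<chi> v \<oplus> \<ominus> \<one> \<otimes> \<chi> w = \<zero>" .
  moreover have "\<chi> v = (\<chi> v \<oplus> \<ominus> \<one> \<otimes> \<chi> w) \<oplus> \<chi> w"
    using carr by algebra
  ultimately show ?thesis
    using carr by simp
qed

lemma lin_to_ring_factor_coord:
  assumes V: "V \<subseteq> vecs R k" "lin_closed R V (vec_add R) (vec_smult R)"
    and \<chi>: "lin_to_ring R V (vec_add R) (vec_smult R) \<chi>"
    and vanish: "\<And>v. v \<in> V \<Longrightarrow> v j = \<zero> \<Longrightarrow> \<chi> v = \<zero>"
  shows "\<exists>\<theta>. lin_to_ring R ((\<lambda>v. v j) ` V) (\<lambda>x y. x \<oplus> y) (\<lambda>a x. a \<otimes> x) \<theta> \<and>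
    (\<forall>v\<in>V. \<chi> v = \<theta> (v j))"
proof -
  have \<chi>_carr: "\<chi> v \<in> carrier R" if "v \<in> V" for v
    using that \<chi> by (auto simp: lin_to_ring_def)
  define \<theta> where "\<theta> x = \<chi> (SOME v. v \<in> V \<and> v j = x)" for x
  have \<theta>: "\<chi> v = \<theta> (v j)" if "v \<in> V" for v
  proof -
    define w where "w = (SOME w. w \<in> V \<and> w j = v j)"
    have "w \<in> V \<and> w j = v j"
      unfolding w_def by (rule someI[where x = v]) (simp add: that)
    then show ?thesis
      using lin_to_ring_coord_cong[OF V \<chi> vanish, where v = v and w = w] that by (simp add: \<theta>_def flip: w_def)
  qed
  have "lin_to_ring R ((\<lambda>v. v j) ` V) (\<lambda>x y. x \<oplus> y) (\<lambda>a x. a \<otimes> x) \<theta>"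
    unfolding lin_to_ring_def
  proof (intro conjI ballI funcsetI)
    fix x assume "x \<in> (\<lambda>v. v j) ` V"
    then obtain v where "v \<in> V" "x = v j" by blast
    then show "\<theta> x \<in> carrier R"
      using \<theta> \<chi>_carr by metis
  next
    fix x y assume "x \<in> (\<lambda>v. v j) ` V" "y \<in> (\<lambda>v. v j) ` V"
    then obtain v w where v: "v \<in> V" "x = v j" and w: "w \<in> V" "y = w j" by blast
    have "vec_add R v w \<in> V"
      using V(2) v w by (simp add: lin_closed_def)
    then show "\<theta> (x \<oplus> y) = \<theta> x \<oplus> \<theta> y"
      using \<theta>[of "vec_add R v w"] \<theta>[OF v(1)] \<theta>[OF w(1)] \<chi> v w by (simp add: lin_to_ring_def)
  next
    fix a x assume a: "a \<in> carrier R" and "x \<in> (\<lambda>v. v j) ` V"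
    then obtain v where v: "v \<in> V" "x = v j" by blast
    have "vec_smult R a v \<in> V"
      using V(2) v a by (simp add: lin_closed_def)
    then show "\<theta> (a \<otimes> x) = a \<otimes> \<theta> x"
      using \<theta>[of "vec_smult R a v"] \<theta>[OF v(1)] \<chi> v a by (simp add: lin_to_ring_def)
  qed
  with \<theta> show ?thesis by blast
qed

lemma lin_closed_coord_image:
  assumes "V \<subseteq> vecs R k" and "lin_closed R V (vec_add R) (vec_smult R)"
  shows "(\<lambda>v. v j) ` V \<subseteq> carrier R"
    and "lin_closed R ((\<lambda>v. v j) ` V) (\<lambda>x y. x \<oplus> y) (\<lambda>a x. a \<otimes> x)"
  using assms(1) by (auto simp: vecs_def intro!: lin_closed_image[OF assms(2)])

lemma vecs_homs_fractional_extend: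
  assumes S: "submonoid S R" and homs: "ideal_homs_fractional R S"
    and V: "V \<subseteq> vecs R (Suc k)" "lin_closed R V (vec_add R) (vec_smult R)"
    and \<psi>: "lin_to_ring R V (vec_add R) (vec_smult R) \<psi>"
    and c1: "c1 \<in> S" and a': "\<forall>i. a' i \<in> carrier R"
    and on_ker: "\<forall>v\<in>V. v k = \<zero> \<longrightarrow> c1 \<otimes> \<psi> v = (\<Oplus>i\<in>{..<k}. a' i \<otimes> v i)"
  shows "\<exists>c\<in>S. \<exists>a. (\<forall>i. a i \<in> carrier R) \<and> (\<forall>v\<in>V. c \<otimes> \<psi> v = (\<Oplus>i\<in>{..<Suc k}. a i \<otimes> v i))"
proof -
  have carr: "v i \<in> carrier R" "\<psi> v \<in> carrier R" if "v \<in> V" for v i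
    using that V(1) \<psi> by (auto simp: vecs_def lin_to_ring_def)
  have c1_carr: "c1 \<in> carrier R"
    using c1 submonoid.subset[OF S] by blast
  define P where "P v = (\<Oplus>i\<in>{..<k}. a' i \<otimes> v i)" for v
  define \<chi> where "\<chi> v = c1 \<otimes> \<psi> v \<ominus> P v" for v
  have P_carr: "P v \<in> carrier R" if "v \<in> V" for v
    using that a' carr by (simp add: P_def)
  have \<chi>_lin: "lin_to_ring R V (vec_add R) (vec_smult R) \<chi>"
    unfolding \<chi>_def P_def
    using lin_to_ring_diff lin_to_ring_cmult[OF c1_carr \<psi>] lin_to_ring_dot[OF a' V(1)] by blast
  have \<chi>_vanish: "\<chi> v = \<zero>" if "v \<in> V" "v k = \<zero>" for v
    using that on_ker P_carr by (simp add: \<chi>_def minus_eq r_neg flip: P_def)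
  obtain \<theta> where \<theta>: "lin_to_ring R ((\<lambda>v. v k) ` V) (\<lambda>x y. x \<oplus> y) (\<lambda>a x. a \<otimes> x) \<theta>"
    and \<chi>_\<theta>: "\<forall>v\<in>V. \<chi> v = \<theta> (v k)"
    using lin_to_ring_factor_coord[OF V \<chi>_lin \<chi>_vanish] by blast
  obtain c2 b where c2: "c2 \<in> S" and b: "b \<in> carrier R"
    and c2_\<theta>: "\<forall>x\<in>(\<lambda>v. v k) ` V. c2 \<otimes> \<theta> x = b \<otimes> x"
    using ideal_homs_fractionalD[OF homs lin_closed_coord_image[OF V] \<theta>] by blast
  have c2_carr: "c2 \<in> carrier R"
    using c2 submonoid.subset[OF S] by blast
  define a where "a i = (if i < k then c2 \<otimes> a' i else if i = k then b else \<zero>)" for i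
  have a_carr: "\<forall>i. a i \<in> carrier R"
    using a' b c2_carr by (simp add: a_def)
  have "c2 \<otimes> c1 \<otimes> \<psi> v = (\<Oplus>i\<in>{..<Suc k}. a i \<otimes> v i)" if v: "v \<in> V" for v
  proof -
    have "(\<Oplus>i\<in>{..<Suc k}. a i \<otimes> v i) = (\<Oplus>i\<in>{..<k}. a i \<otimes> v i) \<oplus> a k \<otimes> v k"
      using a_carr carr[OF v] by (simp add: lessThan_Suc finsum_insert add.m_comm)
    also have "(\<Oplus>i\<in>{..<k}. a i \<otimes> v i) = (\<Oplus>i\<in>{..<k}. c2 \<otimes> (a' i \<otimes> v i))"
      using a' carr[OF v] c2_carr by (intro finsum_cong) (auto simp: a_def m_assoc)
    also have "\<dots> = c2 \<otimes> P v"
      using a' carr[OF v] c2_carr by (simp add: P_def finsum_rdistr)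
    also have "a k \<otimes> v k = c2 \<otimes> \<chi> v"
      using c2_\<theta> \<chi>_\<theta> v by (simp add: a_def)
    finally show ?thesis
      using P_carr[OF v] carr[OF v] c1_carr c2_carr by (simp add: \<chi>_def) algebra
  qed
  then show ?thesis
    using c1 c2 a_carr submonoid.m_closed[OF S] by blast
qed

lemma vecs_homs_fractional:
  assumes S: "submonoid S R" and homs: "ideal_homs_fractional R S"
    and "V \<subseteq> vecs R k" and "lin_closed R V (vec_add R) (vec_smult R)"
    and "lin_to_ring R V (vec_add R) (vec_smult R) \<psi>"
  shows "\<exists>c\<in>S. \<exists>a. (\<forall>i. a i \<in> carrier R) \<and> (\<forall>v\<in>V. c \<otimes> \<psi> v = (\<Oplus>i\<in>{..<k}. a i \<otimes> v i))"
  using assms(3-5)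
proof (induction k arbitrary: V)
  case 0
  have "\<psi> v = \<zero>" if "v \<in> V" for v
  proof -
    have "vec_smult R \<zero> v = v"
      using that "0.prems"(1) by (auto simp: vecs_def fun_eq_iff)
    then have "\<psi> v = \<psi> (vec_smult R \<zero> v)"
      by (simp only:)
    also have "\<dots> = \<zero> \<otimes> \<psi> v"
      using that "0.prems"(3) by (simp add: lin_to_ring_def)
    finally show ?thesis
      using that "0.prems"(3) by (auto simp: lin_to_ring_def Pi_iff)
  qed
  then show ?case
    using submonoid.one_closed[OF S] by (intro bexI[of _ \<one>] exI[of _ "\<lambda>i. \<zero>"]) auto
next
  case (Suc k)
  define V' where "V' = {v \<in> V. v k = \<zero>}"
  have "V' \<subseteq> vecs R k"
  proof
    fix v assume "v \<in> V'"
    then have "v \<in> vecs R (Suc k)" "v k = \<zero>"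
      using Suc.prems(1) by (auto simp: V'_def)
    then show "v \<in> vecs R k"
      by (simp add: vecs_def Suc_le_eq) (metis le_neq_implies_less)
  qed
  moreover have "lin_closed R V' (vec_add R) (vec_smult R)"
    using Suc.prems(1,2) by (auto simp: V'_def lin_closed_def vecs_def)
  moreover have "lin_to_ring R V' (vec_add R) (vec_smult R) \<psi>"
    using Suc.prems(3) by (auto simp: V'_def lin_to_ring_def)
  ultimately obtain c1 a' where "c1 \<in> S" "\<forall>i. a' i \<in> carrier R"
    "\<forall>v\<in>V'. c1 \<otimes> \<psi> v = (\<Oplus>i\<in>{..<k}. a' i \<otimes> v i)"
    using Suc.IH by blast
  then show ?case
    using vecs_homs_fractional_extend[OF S homs Suc.prems] by (simp add: V'_def)
qed

end

section \<open>The truncated polynomial ring R[n]\<close>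

lemma Rn_carrier: "carrier (Rn n) = {p. degree p < n}"
  and Rn_mult: "p \<otimes>\<^bsub>Rn n\<^esub> q = trunc_poly n (p * q)"
  and Rn_zero: "\<zero>\<^bsub>Rn n\<^esub> = 0"
  and Rn_one: "\<one>\<^bsub>Rn n\<^esub> = 1"
  by (simp_all add: Rn_def)

lemma Rn_mult_0: "0 \<otimes>\<^bsub>Rn n\<^esub> p = 0" "p \<otimes>\<^bsub>Rn n\<^esub> 0 = 0"
  by (simp_all add: Rn_mult trunc_poly_def)

lemma coeff_trunc_poly: "coeff (trunc_poly n p) i = (if i < n then coeff p i else 0)"
  by (simp add: trunc_poly_def coeff_sum coeff_monom)

lemma trunc_poly_id: "degree p < n \<Longrightarrow> trunc_poly n p = p"
  by (auto simp: poly_eq_iff coeff_trunc_poly coeff_eq_0)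

lemma degree_poly_shift_le: "degree (poly_shift j p) \<le> degree p"
  by (rule degree_le) (auto simp: coeff_poly_shift coeff_eq_0)

lemma poly_shift_Rn_closed: "p \<in> carrier (Rn n) \<Longrightarrow> poly_shift j p \<in> carrier (Rn n)"
  using degree_poly_shift_le[of j p] by (simp add: Rn_carrier)

lemma coeff_mult_low_zeros:
  fixes u w :: "'a::comm_ring_1 poly"
  assumes "\<forall>i<m. coeff w i = 0"
  shows "coeff (u * w) m = coeff u 0 * coeff w m"
proof -
  have "coeff (u * w) m = (\<Sum>i\<le>m. coeff u i * coeff w (m - i))"
    by (rule coeff_mult)
  also have "\<dots> = (\<Sum>i\<le>m. if i = 0 then coeff u 0 * coeff w m else 0)"
    using assms by (intro sum.cong) auto
  finally show ?thesis
    by simp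
qed

lemma obtain_least_valuation:
  fixes I :: "'a::zero poly set"
  assumes "x0 \<in> I" and "x0 \<noteq> 0"
  obtains j v0 where "v0 \<in> I" and "coeff v0 j \<noteq> 0" and "\<forall>x\<in>I. \<forall>i<j. coeff x i = 0"
proof -
  define j where "j = (LEAST j. \<exists>x\<in>I. coeff x j \<noteq> 0)"
  have "\<exists>j. \<exists>x\<in>I. coeff x j \<noteq> 0"
    using assms leading_coeff_neq_0 by blast
  then have "\<exists>x\<in>I. coeff x j \<noteq> 0"
    unfolding j_def by (rule LeastI_ex)
  moreover have "\<forall>x\<in>I. \<forall>i<j. coeff x i = 0"
    unfolding j_def using not_less_Least by blast
  ultimately show ?thesis
    using that by blast
qed

lemma Rn_monom_mult_poly_shift:
  assumes "degree x < n" and "\<forall>i<j. coeff x i = 0"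
  shows "monom 1 j \<otimes>\<^bsub>Rn n\<^esub> poly_shift j x = x"
  using assms
  by (auto simp: Rn_mult poly_eq_iff coeff_trunc_poly coeff_monom_mult coeff_poly_shift coeff_eq_0)

lemma Rn_monom_mult_eq_0_iff:
  assumes "j \<le> n"
  shows "monom 1 (n - j) \<otimes>\<^bsub>Rn n\<^esub> y = 0 \<longleftrightarrow> (\<forall>i<j. coeff y i = 0)"
proof -
  have coeff_prod: "coeff (monom 1 (n - j) \<otimes>\<^bsub>Rn n\<^esub> y) i =
      (if n - j \<le> i \<and> i < n then coeff y (i - (n - j)) else 0)" for i
    by (simp add: Rn_mult coeff_trunc_poly coeff_monom_mult)
  show ?thesis
  proof
    assume "monom 1 (n - j) \<otimes>\<^bsub>Rn n\<^esub> y = 0"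
    moreover have "coeff y i = coeff (monom 1 (n - j) \<otimes>\<^bsub>Rn n\<^esub> y) (i + (n - j))" if "i < j" for i
      using that assms by (simp add: coeff_prod) arith
    ultimately show "\<forall>i<j. coeff y i = 0"
      by simp
  next
    assume low: "\<forall>i<j. coeff y i = 0"
    have "i - (n - j) < j" if "n - j \<le> i" "i < n" for i
      using that by arith
    then show "monom 1 (n - j) \<otimes>\<^bsub>Rn n\<^esub> y = 0"
      using low by (simp add: poly_eq_iff coeff_prod)
  qed
qed

lemma one_mem_nzd: "n \<ge> 1 \<Longrightarrow> (1::'a::comm_ring_1 poly) \<in> nzd n"
  by (auto simp: nzd_def Rn_carrier Rn_mult Rn_zero trunc_poly_id)

lemma mem_nzd_if_coeff_0:
  fixes u :: "'a::idom poly"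
  assumes "coeff u 0 \<noteq> 0" and "degree u < n"
  shows "u \<in> nzd n"
proof -
  have "trunc_poly n (u * w) \<noteq> 0" if "w \<noteq> 0" "degree w < n" for w
  proof -
    define m where "m = (LEAST m. coeff w m \<noteq> 0)"
    have "\<exists>m. coeff w m \<noteq> 0"
      using that(1) leading_coeff_neq_0 by blast
    then have "coeff w m \<noteq> 0"
      unfolding m_def by (rule LeastI_ex)
    moreover have "\<forall>i<m. coeff w i = 0"
      unfolding m_def using not_less_Least by blast
    moreover have "m < n"
      using le_degree[OF \<open>coeff w m \<noteq> 0\<close>] that(2) by simp
    ultimately have "coeff (trunc_poly n (u * w)) m \<noteq> 0"
      using assms(1) by (simp add: coeff_trunc_poly coeff_mult_low_zeros)
    then show ?thesis
      by auto
  qed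
  then show ?thesis
    using assms(2) by (auto simp: nzd_def Rn_carrier Rn_mult Rn_zero)
qed

lemma submonoid_nzd:
  assumes "n \<ge> 1" and "cring (Rn n :: 'a::comm_ring_1 poly ring)"
  shows "submonoid (nzd n) (Rn n :: 'a poly ring)"
proof
  interpret cring "Rn n :: 'a poly ring" by (rule assms(2))
  show "nzd n \<subseteq> carrier (Rn n)"
    by (auto simp: nzd_def)
  show "\<one>\<^bsub>Rn n\<^esub> \<in> nzd n"
    using one_mem_nzd[OF assms(1)] by (simp add: Rn_one)
  show "u \<otimes>\<^bsub>Rn n\<^esub> v \<in> nzd n" if u: "u \<in> nzd n" and v: "v \<in> nzd n" for u v :: "'a poly"
    unfolding nzd_def
  proof (intro CollectI conjI ballI impI)
    have carr: "u \<in> carrier (Rn n)" "v \<in> carrier (Rn n)"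
      using u v by (auto simp: nzd_def)
    then show "u \<otimes>\<^bsub>Rn n\<^esub> v \<in> carrier (Rn n)"
      by (rule m_closed)
    fix w assume w: "w \<in> carrier (Rn n)" and "u \<otimes>\<^bsub>Rn n\<^esub> v \<otimes>\<^bsub>Rn n\<^esub> w = \<zero>\<^bsub>Rn n\<^esub>"
    then have "u \<otimes>\<^bsub>Rn n\<^esub> (v \<otimes>\<^bsub>Rn n\<^esub> w) = \<zero>\<^bsub>Rn n\<^esub>"
      using carr by (simp add: m_assoc)
    then have "v \<otimes>\<^bsub>Rn n\<^esub> w = \<zero>\<^bsub>Rn n\<^esub>"
      using u carr w by (simp add: nzd_def)
    then show "w = \<zero>\<^bsub>Rn n\<^esub>"
      using v w by (simp add: nzd_def)
  qed
qed

lemma Rn_hom_preserves_low_zeros: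
  fixes \<theta> :: "'a::comm_ring_1 poly \<Rightarrow> 'a poly"
  assumes \<theta>: "lin_to_ring (Rn n) I (\<lambda>x y. x \<oplus>\<^bsub>Rn n\<^esub> y) (\<lambda>a x. a \<otimes>\<^bsub>Rn n\<^esub> x) \<theta>"
    and "x \<in> I" and "j \<le> n" and "\<forall>i<j. coeff x i = 0"
  shows "\<forall>i<j. coeff (\<theta> x) i = 0"
proof (cases "j = 0")
  case False
  define s where "s = (monom 1 (n - j) :: 'a poly)"
  have carr: "s \<in> carrier (Rn n)" "0 \<in> carrier (Rn n)"
    using False assms(3) by (simp_all add: s_def Rn_carrier degree_monom_eq)
  have "s \<otimes>\<^bsub>Rn n\<^esub> \<theta> x = \<theta> (s \<otimes>\<^bsub>Rn n\<^esub> x)"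
    using \<theta> carr(1) assms(2) unfolding lin_to_ring_def by simp
  also have "s \<otimes>\<^bsub>Rn n\<^esub> x = 0 \<otimes>\<^bsub>Rn n\<^esub> x"
    using assms(4) by (simp add: s_def Rn_mult_0 Rn_monom_mult_eq_0_iff[OF assms(3)])
  also have "\<theta> (0 \<otimes>\<^bsub>Rn n\<^esub> x) = 0 \<otimes>\<^bsub>Rn n\<^esub> \<theta> x"
    using \<theta> carr(2) assms(2) unfolding lin_to_ring_def by blast
  also have "\<dots> = 0"
    by (rule Rn_mult_0)
  finally show ?thesis
    by (simp add: s_def Rn_monom_mult_eq_0_iff[OF assms(3)])
qed simp

lemma Rn_ideal_hom_mult_poly_shift:
  fixes \<theta> :: "'a::comm_ring_1 poly \<Rightarrow> 'a poly"
  assumes "cring (Rn n :: 'a poly ring)" and I: "I \<subseteq> carrier (Rn n)"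
    and \<theta>: "lin_to_ring (Rn n) I (\<lambda>x y. x \<oplus>\<^bsub>Rn n\<^esub> y) (\<lambda>a x. a \<otimes>\<^bsub>Rn n\<^esub> x) \<theta>"
    and "j < n" and low: "\<forall>x\<in>I. \<forall>i<j. coeff x i = 0"
    and v0: "v0 \<in> I" and x: "x \<in> I"
  shows "poly_shift j v0 \<otimes>\<^bsub>Rn n\<^esub> \<theta> x = poly_shift j (\<theta> v0) \<otimes>\<^bsub>Rn n\<^esub> x"
proof -
  interpret cring "Rn n :: 'a poly ring" by fact
  define t where "t = (monom 1 j :: 'a poly)"
  have t: "t \<in> carrier (Rn n)"
    using \<open>j < n\<close> by (simp add: t_def Rn_carrier degree_monom_eq)
  have shift: "poly_shift j y \<in> carrier (Rn n) \<and> y = t \<otimes>\<^bsub>Rn n\<^esub> poly_shift j y"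
    if "y \<in> carrier (Rn n)" "\<forall>i<j. coeff y i = 0" for y
    using that poly_shift_Rn_closed Rn_monom_mult_poly_shift[of y n j]
    by (auto simp: Rn_carrier t_def)
  have \<theta>_mult: "\<theta> (a \<otimes>\<^bsub>Rn n\<^esub> y) = a \<otimes>\<^bsub>Rn n\<^esub> \<theta> y" if "a \<in> carrier (Rn n)" "y \<in> I" for a y
    using \<theta> that by (simp add: lin_to_ring_def)
  define u w b where "u = poly_shift j v0" and "w = poly_shift j x" and "b = poly_shift j (\<theta> v0)"
  have u: "u \<in> carrier (Rn n)" "v0 = t \<otimes>\<^bsub>Rn n\<^esub> u"
    and w: "w \<in> carrier (Rn n)" "x = t \<otimes>\<^bsub>Rn n\<^esub> w"
    using shift I v0 x low by (auto simp: u_def w_def)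
  have "\<theta> v0 \<in> carrier (Rn n)"
    using \<theta> v0 by (auto simp: lin_to_ring_def)
  moreover have "\<forall>i<j. coeff (\<theta> v0) i = 0"
    using Rn_hom_preserves_low_zeros[OF \<theta> v0 less_imp_le[OF \<open>j < n\<close>]] low v0 by blast
  ultimately have b: "b \<in> carrier (Rn n)" "\<theta> v0 = t \<otimes>\<^bsub>Rn n\<^esub> b"
    using shift unfolding b_def by blast+
  have "u \<otimes>\<^bsub>Rn n\<^esub> \<theta> x = \<theta> (u \<otimes>\<^bsub>Rn n\<^esub> x)"
    using \<theta>_mult u x by simp
  also have "u \<otimes>\<^bsub>Rn n\<^esub> x = w \<otimes>\<^bsub>Rn n\<^esub> v0"
    using u w t by (simp add: m_ac)
  also have "\<theta> (w \<otimes>\<^bsub>Rn n\<^esub> v0) = w \<otimes>\<^bsub>Rn n\<^esub> \<theta> v0"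
    using \<theta>_mult w v0 by simp
  also have "\<dots> = b \<otimes>\<^bsub>Rn n\<^esub> x"
    using b w t by (simp add: m_ac)
  finally show ?thesis
    by (simp add: u_def b_def)
qed

lemma Rn_ideal_homs_fractional:
  assumes "n \<ge> 1" and "cring (Rn n :: 'a::idom poly ring)"
  shows "ideal_homs_fractional (Rn n :: 'a poly ring) (nzd n)"
  unfolding ideal_homs_fractional_def
proof (intro allI impI)
  fix I and \<theta> :: "'a poly \<Rightarrow> 'a poly"
  assume I: "I \<subseteq> carrier (Rn n)"
    and \<theta>: "lin_to_ring (Rn n) I (\<lambda>x y. x \<oplus>\<^bsub>Rn n\<^esub> y) (\<lambda>a x. a \<otimes>\<^bsub>Rn n\<^esub> x) \<theta>"
  show "\<exists>c\<in>nzd n. \<exists>b\<in>carrier (Rn n). \<forall>x\<in>I. c \<otimes>\<^bsub>Rn n\<^esub> \<theta> x = b \<otimes>\<^bsub>Rn n\<^esub> x"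
  proof (cases "I \<subseteq> {0}")
    case True
    have "0 \<in> carrier (Rn n)"
      using assms(1) by (simp add: Rn_carrier)
    then have "\<theta> x = 0" if "x \<in> I" for x
      using \<theta> that True by (auto simp: lin_to_ring_def Rn_mult_0 dest!: bspec[of _ _ 0])
    then show ?thesis
      using \<open>0 \<in> carrier (Rn n)\<close> one_mem_nzd[OF assms(1)] True
      by (intro bexI[of _ 1] bexI[of _ 0]) (auto simp: Rn_mult_0)
  next
    case False
    then obtain x0 where "x0 \<in> I" "x0 \<noteq> 0"
      by blast
    then obtain j v0 where v0: "v0 \<in> I" "coeff v0 j \<noteq> 0" and low: "\<forall>x\<in>I. \<forall>i<j. coeff x i = 0"
      by (rule obtain_least_valuation)
    have "j < n"
      using le_degree[OF v0(2)] v0(1) I by (auto simp: Rn_carrier)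
    have "poly_shift j v0 \<in> nzd n"
      using v0 I poly_shift_Rn_closed[of v0 n j]
      by (intro mem_nzd_if_coeff_0) (auto simp: coeff_poly_shift Rn_carrier)
    moreover have "poly_shift j (\<theta> v0) \<in> carrier (Rn n)"
      using \<theta> v0(1) by (intro poly_shift_Rn_closed) (auto simp: lin_to_ring_def)
    ultimately show ?thesis
      using Rn_ideal_hom_mult_poly_shift[OF assms(2) I \<theta> \<open>j < n\<close> low v0(1)] by blast
  qed
qed

section \<open>Duals of finitely generated modules\<close>

definition dual_coords :: "('a, 'b) ring_scheme \<Rightarrow> nat \<Rightarrow> (nat \<Rightarrow> 'm) \<Rightarrow> ('m \<Rightarrow> 'a) \<Rightarrow> nat \<Rightarrow> 'a" where
  "dual_coords R k h \<phi> = (\<lambda>i. if i < k then \<phi> (h i) else \<zero>\<^bsub>R\<^esub>)"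

context
  fixes R :: "('a, 'b) ring_scheme" and M :: "('a, 'm) module"
  assumes M_module: "Module.module R M"
begin

interpretation Module.module R M
  by (fact M_module)

lemma dual_closed: "\<phi> \<in> dual R M \<Longrightarrow> x \<in> carrier M \<Longrightarrow> \<phi> x \<in> carrier R"
  by (auto simp: dual_def lin_to_ring_def)

lemma dual_add_apply: "\<phi> \<in> dual R M \<Longrightarrow> x \<in> carrier M \<Longrightarrow> y \<in> carrier M \<Longrightarrow>
    \<phi> (x \<oplus>\<^bsub>M\<^esub> y) = \<phi> x \<oplus>\<^bsub>R\<^esub> \<phi> y"
  by (auto simp: dual_def lin_to_ring_def)

lemma dual_smult_apply: "\<phi> \<in> dual R M \<Longrightarrow> a \<in> carrier R \<Longrightarrow> x \<in> carrier M \<Longrightarrow>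
    \<phi> (a \<odot>\<^bsub>M\<^esub> x) = a \<otimes>\<^bsub>R\<^esub> \<phi> x"
  by (auto simp: dual_def lin_to_ring_def)

lemma dual_zero:
  assumes "\<phi> \<in> dual R M"
  shows "\<phi> \<zero>\<^bsub>M\<^esub> = \<zero>\<^bsub>R\<^esub>"
proof -
  have "\<phi> \<zero>\<^bsub>M\<^esub> = \<phi> (\<zero>\<^bsub>R\<^esub> \<odot>\<^bsub>M\<^esub> \<zero>\<^bsub>M\<^esub>)"
    by simp
  also have "\<dots> = \<zero>\<^bsub>R\<^esub> \<otimes>\<^bsub>R\<^esub> \<phi> \<zero>\<^bsub>M\<^esub>"
    by (rule dual_smult_apply[OF assms]) simp_all
  finally show ?thesis
    using dual_closed[OF assms] by simp
qed

lemma dual_finsum: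
  assumes "\<phi> \<in> dual R M" and "finite J"
  shows "f \<in> J \<rightarrow> carrier M \<Longrightarrow> \<phi> (finsum M f J) = (\<Oplus>\<^bsub>R\<^esub>i\<in>J. \<phi> (f i))"
  using assms(2)
proof (induction J rule: finite_induct)
  case empty
  then show ?case
    using dual_zero[OF assms(1)] by (simp add: M.finsum_empty)
next
  case (insert j J)
  then show ?case
    using assms(1) by (simp add: dual_add_apply dual_closed Pi_iff finsum_insert M.finsum_insert)
qed

lemma lin_closed_dual: "lin_closed R (dual R M) (dual_add R M) (dual_smult R M)"
  unfolding lin_closed_def
proof (intro conjI ballI)
  fix \<phi> \<chi> assume \<phi>: "\<phi> \<in> dual R M" and \<chi>: "\<chi> \<in> dual R M"
  show "dual_add R M \<phi> \<chi> \<in> dual R M"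
    unfolding dual_def lin_to_ring_def
  proof (intro CollectI conjI ballI funcsetI)
    show "dual_add R M \<phi> \<chi> \<in> extensional (carrier M)"
      by (simp add: dual_add_def)
    show "dual_add R M \<phi> \<chi> x \<in> carrier R" if "x \<in> carrier M" for x
      using that \<phi> \<chi> by (simp add: dual_add_def dual_closed)
    show "dual_add R M \<phi> \<chi> (x \<oplus>\<^bsub>M\<^esub> y) = dual_add R M \<phi> \<chi> x \<oplus>\<^bsub>R\<^esub> dual_add R M \<phi> \<chi> y"
      if "x \<in> carrier M" "y \<in> carrier M" for x y
      using that \<phi> \<chi> by (simp add: dual_add_def dual_add_apply dual_closed R.a_ac)
    show "dual_add R M \<phi> \<chi> (a \<odot>\<^bsub>M\<^esub> x) = a \<otimes>\<^bsub>R\<^esub> dual_add R M \<phi> \<chi> x"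
      if "a \<in> carrier R" "x \<in> carrier M" for a x
      using that \<phi> \<chi> by (simp add: dual_add_def dual_smult_apply dual_closed R.r_distr)
  qed
next
  fix a \<phi> assume a: "a \<in> carrier R" and \<phi>: "\<phi> \<in> dual R M"
  show "dual_smult R M a \<phi> \<in> dual R M"
    unfolding dual_def lin_to_ring_def
  proof (intro CollectI conjI ballI funcsetI)
    show "dual_smult R M a \<phi> \<in> extensional (carrier M)"
      by (simp add: dual_smult_def)
    show "dual_smult R M a \<phi> x \<in> carrier R" if "x \<in> carrier M" for x
      using that a \<phi> by (simp add: dual_smult_def dual_closed)
    show "dual_smult R M a \<phi> (x \<oplus>\<^bsub>M\<^esub> y) = dual_smult R M a \<phi> x \<oplus>\<^bsub>R\<^esub> dual_smult R M a \<phi> y"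
      if "x \<in> carrier M" "y \<in> carrier M" for x y
      using that a \<phi> by (simp add: dual_smult_def dual_add_apply dual_closed R.r_distr)
    show "dual_smult R M a \<phi> (b \<odot>\<^bsub>M\<^esub> x) = b \<otimes>\<^bsub>R\<^esub> dual_smult R M a \<phi> x"
      if "b \<in> carrier R" "x \<in> carrier M" for b x
      using that a \<phi> by (simp add: dual_smult_def dual_smult_apply dual_closed R.m_lcomm)
  qed
qed

lemma dual_eqI:
  assumes \<phi>: "\<phi> \<in> dual R M" and \<chi>: "\<chi> \<in> dual R M"
    and G: "finite G" "G \<subseteq> carrier M"
    and span: "\<forall>x\<in>carrier M. \<exists>c\<in>G \<rightarrow> carrier R. x = finsum M (\<lambda>g. c g \<odot>\<^bsub>M\<^esub> g) G"
    and eq: "\<forall>g\<in>G. \<phi> g = \<chi> g"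
  shows "\<phi> = \<chi>"
proof
  fix x
  show "\<phi> x = \<chi> x"
  proof (cases "x \<in> carrier M")
    case True
    then obtain c where c: "c \<in> G \<rightarrow> carrier R" and x: "x = finsum M (\<lambda>g. c g \<odot>\<^bsub>M\<^esub> g) G"
      using span by blast
    have terms: "(\<lambda>g. c g \<odot>\<^bsub>M\<^esub> g) \<in> G \<rightarrow> carrier M"
      using c G(2) by auto
    have "\<phi> (c g \<odot>\<^bsub>M\<^esub> g) = \<chi> (c g \<odot>\<^bsub>M\<^esub> g)" if "g \<in> G" for g
    proof -
      have "c g \<in> carrier R" "g \<in> carrier M"
        using that c G(2) by auto
      then show ?thesis
        using that eq by (simp add: dual_smult_apply[OF \<phi>] dual_smult_apply[OF \<chi>])
    qed
    then have "(\<Oplus>\<^bsub>R\<^esub>g\<in>G. \<phi> (c g \<odot>\<^bsub>M\<^esub> g)) = (\<Oplus>\<^bsub>R\<^esub>g\<in>G. \<chi> (c g \<odot>\<^bsub>M\<^esub> g))"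
      using terms \<chi> by (intro R.finsum_cong') (auto simp: dual_closed Pi_iff)
    then show ?thesis
      unfolding x using dual_finsum[OF \<phi> G(1) terms] dual_finsum[OF \<chi> G(1) terms] by simp
  next
    case False
    moreover have "\<phi> \<in> extensional (carrier M)" "\<chi> \<in> extensional (carrier M)"
      using \<phi> \<chi> unfolding dual_def by blast+
    ultimately show ?thesis
      by (metis extensional_arb)
  qed
qed

lemma dual_coords_vecs:
  "\<phi> \<in> dual R M \<Longrightarrow> h ` {..<k} \<subseteq> carrier M \<Longrightarrow> dual_coords R k h \<phi> \<in> vecs R k"
  by (auto simp: dual_coords_def vecs_def dual_closed)

lemma dual_coords_add:
  "\<phi> \<in> dual R M \<Longrightarrow> \<chi> \<in> dual R M \<Longrightarrow> h ` {..<k} \<subseteq> carrier M \<Longrightarrow>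
    dual_coords R k h (dual_add R M \<phi> \<chi>) = vec_add R (dual_coords R k h \<phi>) (dual_coords R k h \<chi>)"
  by (auto simp: dual_coords_def dual_add_def fun_eq_iff dual_closed)

lemma dual_coords_smult:
  "\<phi> \<in> dual R M \<Longrightarrow> a \<in> carrier R \<Longrightarrow> h ` {..<k} \<subseteq> carrier M \<Longrightarrow>
    dual_coords R k h (dual_smult R M a \<phi>) = vec_smult R a (dual_coords R k h \<phi>)"
  by (auto simp: dual_coords_def dual_smult_def fun_eq_iff dual_closed)

lemma dual_lincomb:
  assumes "\<phi> \<in> dual R M" and "\<forall>i. a i \<in> carrier R" and "h ` {..<k} \<subseteq> carrier M"
  shows "\<phi> (\<Oplus>\<^bsub>M\<^esub>i\<in>{..<k}. a i \<odot>\<^bsub>M\<^esub> h i) = (\<Oplus>\<^bsub>R\<^esub>i\<in>{..<k}. a i \<otimes>\<^bsub>R\<^esub> dual_coords R k h \<phi> i)"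
proof -
  have "\<phi> (\<Oplus>\<^bsub>M\<^esub>i\<in>{..<k}. a i \<odot>\<^bsub>M\<^esub> h i) = (\<Oplus>\<^bsub>R\<^esub>i\<in>{..<k}. \<phi> (a i \<odot>\<^bsub>M\<^esub> h i))"
    using assms by (intro dual_finsum) auto
  also have "\<dots> = (\<Oplus>\<^bsub>R\<^esub>i\<in>{..<k}. a i \<otimes>\<^bsub>R\<^esub> dual_coords R k h \<phi> i)"
    using assms by (intro R.finsum_cong) (auto simp: dual_coords_def dual_smult_apply dual_closed image_subset_iff)
  finally show ?thesis .
qed

lemma inj_on_dual_coords:
  assumes G: "finite G" "G \<subseteq> carrier M"
    and span: "\<forall>x\<in>carrier M. \<exists>c\<in>G \<rightarrow> carrier R. x = finsum M (\<lambda>g. c g \<odot>\<^bsub>M\<^esub> g) G"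
    and G_eq: "G = h ` {..<k}"
  shows "inj_on (dual_coords R k h) (dual R M)"
proof (rule inj_onI)
  fix \<phi> \<chi> assume \<phi>: "\<phi> \<in> dual R M" and \<chi>: "\<chi> \<in> dual R M"
    and coords_eq: "dual_coords R k h \<phi> = dual_coords R k h \<chi>"
  have "\<phi> (h i) = \<chi> (h i)" if "i < k" for i
    using fun_cong[OF coords_eq, of i] that by (simp add: dual_coords_def)
  then show "\<phi> = \<chi>"
    using G_eq by (intro dual_eqI[OF \<phi> \<chi> G span]) auto
qed

lemma lin_closed_dual_coords:
  assumes "h ` {..<k} \<subseteq> carrier M"
  shows "lin_closed R (dual_coords R k h ` dual R M) (vec_add R) (vec_smult R)"
  by (rule lin_closed_image[OF lin_closed_dual])
    (simp_all add: dual_coords_add[OF _ _ assms] dual_coords_smult[OF _ _ assms])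

lemma lin_to_ring_ddual_coords:
  assumes "inj_on (dual_coords R k h) (dual R M)" and "h ` {..<k} \<subseteq> carrier M"
    and "\<psi> \<in> ddual R M"
  shows "lin_to_ring R (dual_coords R k h ` dual R M) (vec_add R) (vec_smult R)
    (\<psi> \<circ> inv_into (dual R M) (dual_coords R k h))"
  using assms(3) dual_coords_add[OF _ _ assms(2)] dual_coords_smult[OF _ _ assms(2)]
  unfolding ddual_def by (intro lin_to_ring_inv_into[OF assms(1) lin_closed_dual]) auto

theorem ddual_fractional_can_map:
  assumes S: "submonoid S R" and homs: "ideal_homs_fractional R S"
    and fin_gen: "fin_gen_module R M" and \<psi>: "\<psi> \<in> ddual R M"
  shows "\<exists>c\<in>S. \<exists>m\<in>carrier M. ddual_smult R M c \<psi> = can_map R M m"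
proof -
  obtain G where G: "finite G" "G \<subseteq> carrier M"
    and span: "\<forall>x\<in>carrier M. \<exists>c\<in>G \<rightarrow> carrier R. x = finsum M (\<lambda>g. c g \<odot>\<^bsub>M\<^esub> g) G"
    using fin_gen unfolding fin_gen_module_def by blast
  obtain h and k :: nat where G_eq: "G = h ` {..<k}"
    using G(1) unfolding finite_conv_nat_seg_image lessThan_def by blast
  have h: "h ` {..<k} \<subseteq> carrier M"
    using G(2) G_eq by simp
  let ?coords = "dual_coords R k h"
  have inj: "inj_on ?coords (dual R M)"
    by (rule inj_on_dual_coords[OF G span G_eq])
  obtain c a where c: "c \<in> S" and a: "\<forall>i. a i \<in> carrier R"
    and ca: "\<forall>v\<in>?coords ` dual R M.
      c \<otimes>\<^bsub>R\<^esub> (\<psi> \<circ> inv_into (dual R M) ?coords) v = (\<Oplus>\<^bsub>R\<^esub>i\<in>{..<k}. a i \<otimes>\<^bsub>R\<^esub> v i)"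
    using R.vecs_homs_fractional[OF S homs _ lin_closed_dual_coords[OF h]
        lin_to_ring_ddual_coords[OF inj h \<psi>]] dual_coords_vecs[OF _ h] by blast
  define m where "m = (\<Oplus>\<^bsub>M\<^esub>i\<in>{..<k}. a i \<odot>\<^bsub>M\<^esub> h i)"
  have "m \<in> carrier M"
    using a h unfolding m_def by (intro M.finsum_closed) auto
  moreover have "\<phi> m = c \<otimes>\<^bsub>R\<^esub> \<psi> \<phi>" if "\<phi> \<in> dual R M" for \<phi>
  proof -
    have "\<phi> m = (\<Oplus>\<^bsub>R\<^esub>i\<in>{..<k}. a i \<otimes>\<^bsub>R\<^esub> ?coords \<phi> i)"
      unfolding m_def by (rule dual_lincomb[OF that a h])
    also have "\<dots> = c \<otimes>\<^bsub>R\<^esub> (\<psi> \<circ> inv_into (dual R M) ?coords) (?coords \<phi>)"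
      using ca that by simp
    also have "\<dots> = c \<otimes>\<^bsub>R\<^esub> \<psi> \<phi>"
      using inv_into_f_f[OF inj that] by simp
    finally show ?thesis .
  qed
  ultimately show ?thesis
    using c unfolding ddual_smult_def can_map_def by (intro bexI restrict_ext) auto
qed

end

theorem proposition3p5p3:
  fixes n :: nat and M :: "('a::idom poly, 'm) module"
  assumes "noetherian_type TYPE('a)"
    and "n \<ge> 1"
    and "Module.module (Rn n) M"
    and "fin_gen_module (Rn n) M"
  shows "\<forall>\<psi>\<in>ddual (Rn n) M. \<exists>\<alpha>\<in>nzd n. \<exists>m\<in>carrier M.
           ddual_smult (Rn n) M \<alpha> \<psi> = can_map (Rn n) M m"
proof
  fix \<psi> assume "\<psi> \<in> ddual (Rn n) M"
  have "cring (Rn n :: 'a poly ring)"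
    using assms(3) by (rule Module.module.axioms(1))
  with assms(2-4) \<open>\<psi> \<in> ddual (Rn n) M\<close>
  show "\<exists>\<alpha>\<in>nzd n. \<exists>m\<in>carrier M. ddual_smult (Rn n) M \<alpha> \<psi> = can_map (Rn n) M m"
    by (intro ddual_fractional_can_map submonoid_nzd Rn_ideal_homs_fractional)
qed

end
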